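(* Let $p\in\mathbb N$. For each $n \in \mathbb N$ and $q \in \{0,1,\dots,\lfloor pn/(p+1)\rfloor\}$, $$\sum_{\mathbf m \in S_{n,q,p}} \pi_{\mathbf m} = \sum_{\substack{\mathbf k=(k_1,\dots,k_{p+1})\in\{0,1,2,\dots\}^{p+1}\\ \sum_{j=1}^{p+1} j k_j = n,\ \sum_{j=1}^{p+1} k_j = n-q}} \frac{1}{k_1!\,k_2!\cdots k_{p+1}!\; 2^{k_2}\cdots (p+1)^{k_{p+1}}}.$$
   Context: $S_{n,q,p} = \{\mathbf m=(m_1,\dots,m_{n-q}) \in \{0,1,\dots,p\}^{n-q} : m_1+\cdots+m_{n-q}=q\}$, and $\pi_{\mathbf m} = \prod_{i=1}^{n-q}[m_i+\cdots+m_{n-q} + (n-q-i+1)]^{-1}$. *)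

theory Defs
  imports "HOL-Library.FuncSet" Complex_Main
begin

definition S_set :: "nat \<Rightarrow> nat \<Rightarrow> nat \<Rightarrow> (nat \<Rightarrow> nat) set" where
  "S_set n q p = {m \<in> {1..n-q} \<rightarrow>\<^sub>E {0..p}. (\<Sum>i=1..n-q. m i) = q}"

definition pi_weight :: "nat \<Rightarrow> nat \<Rightarrow> (nat \<Rightarrow> nat) \<Rightarrow> real" where
  "pi_weight n q m = (\<Prod>i=1..n-q. 1 / real ((\<Sum>j=i..n-q. m j) + (n - q - i + 1)))"

definition K_set :: "nat \<Rightarrow> nat \<Rightarrow> nat \<Rightarrow> (nat \<Rightarrow> nat) set" where
  "K_set n q p = {k \<in> {1..p+1} \<rightarrow>\<^sub>E (UNIV :: nat set).
      (\<Sum>j=1..p+1. j * k j) = n \<and> (\<Sum>j=1..p+1. k j) = n - q}"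

end

theory Submission
  imports Defs
begin

(* Write N = n - q.  On the left, splitting off m_1, whose factor in pi_m is 1/(q + N), gives
   (q + N) A(N, q) = sum_{c <= min(p,q)} A(N - 1, q - c).  On the right, n!/prod_j (k_j! j^k_j)
   counts the permutations of n points with k_j cycles of length j, so removing the cycle through
   a fixed point gives n G(n, N) = sum_{j <= p+1} G(n - j, N - 1), G(n, N) being the sum over
   cycle types with N cycles.  With n = N + q and j = c + 1 the two recurrences coincide. *)

lemma sum_PiE_insert:
  assumes "x \<notin> S"
  shows "(\<Sum>f\<in>Pi\<^sub>E (insert x S) T. h f) = (\<Sum>y\<in>T x. \<Sum>g\<in>Pi\<^sub>E S T. h (g(x := y)))"
proof -
  have "(\<Sum>f\<in>Pi\<^sub>E (insert x S) T. h f) = (\<Sum>(y, g)\<in>T x \<times> Pi\<^sub>E S T. h (g(x := y)))"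
    unfolding PiE_insert_eq by (subst sum.reindex[OF inj_combinator[OF assms]]) (simp add: case_prod_unfold)
  also have "\<dots> = (\<Sum>y\<in>T x. \<Sum>g\<in>Pi\<^sub>E S T. h (g(x := y)))"
    by (rule sum.cartesian_product[symmetric])
  finally show ?thesis .
qed

lemma sum_fun_upd_exchange:
  fixes h :: "'a \<Rightarrow> 'b \<Rightarrow> 'c::comm_monoid_add"
  assumes "finite A" "x \<in> A"
  shows "(\<Sum>i\<in>A. h i ((f(x := y)) i)) + h x (f x) = (\<Sum>i\<in>A. h i (f i)) + h x y"
proof -
  have "(\<Sum>i\<in>A - {x}. h i ((f(x := y)) i)) = (\<Sum>i\<in>A - {x}. h i (f i))"
    by (rule sum.cong) auto
  then show ?thesis
    using sum.remove[OF assms, of "\<lambda>i. h i ((f(x := y)) i)"] sum.remove[OF assms, of "\<lambda>i. h i (f i)"]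
    by (simp add: ac_simps)
qed

lemma prod_fun_upd_exchange:
  fixes h :: "'a \<Rightarrow> 'b \<Rightarrow> 'c::comm_monoid_mult"
  assumes "finite A" "x \<in> A"
  shows "(\<Prod>i\<in>A. h i ((f(x := y)) i)) * h x (f x) = (\<Prod>i\<in>A. h i (f i)) * h x y"
proof -
  have "(\<Prod>i\<in>A - {x}. h i ((f(x := y)) i)) = (\<Prod>i\<in>A - {x}. h i (f i))"
    by (rule prod.cong) auto
  then show ?thesis
    using prod.remove[OF assms, of "\<lambda>i. h i ((f(x := y)) i)"] prod.remove[OF assms, of "\<lambda>i. h i (f i)"]
    by (simp add: ac_simps)
qed

definition cycle_types :: "nat set \<Rightarrow> nat \<Rightarrow> nat \<Rightarrow> (nat \<Rightarrow> nat) set" where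
  "cycle_types J n M = {k \<in> J \<rightarrow>\<^sub>E (UNIV :: nat set). (\<Sum>j\<in>J. j * k j) = n \<and> (\<Sum>j\<in>J. k j) = M}"

definition cycle_weight :: "nat set \<Rightarrow> (nat \<Rightarrow> nat) \<Rightarrow> real" where
  "cycle_weight J k = 1 / (\<Prod>j\<in>J. fact (k j) * real j ^ k j)"

definition cycle_sum :: "nat set \<Rightarrow> nat \<Rightarrow> nat \<Rightarrow> real" where
  "cycle_sum J n M = (\<Sum>k\<in>cycle_types J n M. cycle_weight J k)"

lemma cycle_types_mult_le:
  assumes "k \<in> cycle_types J n M" "finite J" "j \<in> J"
  shows "j * k j \<le> n"
  using assms member_le_sum[of j J "\<lambda>j. j * k j"] by (simp add: cycle_types_def)

lemma finite_cycle_types: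
  assumes "finite J" "0 \<notin> J"
  shows "finite (cycle_types J n M)"
proof (rule finite_subset)
  show "cycle_types J n M \<subseteq> J \<rightarrow>\<^sub>E {0..n}"
  proof
    fix k assume k: "k \<in> cycle_types J n M"
    have "k j \<le> n" if "j \<in> J" for j
    proof -
      have "k j \<le> j * k j" using assms(2) that by (cases j) auto
      also have "\<dots> \<le> n" by (rule cycle_types_mult_le[OF k assms(1) that])
      finally show ?thesis .
    qed
    then show "k \<in> J \<rightarrow>\<^sub>E {0..n}" using k by (auto simp: cycle_types_def PiE_iff)
  qed
  show "finite (J \<rightarrow>\<^sub>E {0..n})" using assms(1) by (simp add: finite_PiE)
qed

lemma cycle_sum_eq_0:
  assumes "0 \<notin> J" "n < M"
  shows "cycle_sum J n M = 0"
proof -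
  have "cycle_types J n M = {}"
  proof (rule ccontr)
    assume "cycle_types J n M \<noteq> {}"
    then obtain k where k: "k \<in> cycle_types J n M" by blast
    have "(\<Sum>j\<in>J. k j) \<le> (\<Sum>j\<in>J. j * k j)"
    proof (rule sum_mono)
      show "k j \<le> j * k j" if "j \<in> J" for j using assms(1) that by (cases j) auto
    qed
    then show False using k assms(2) by (simp add: cycle_types_def)
  qed
  then show ?thesis by (simp add: cycle_sum_def)
qed

lemma cycle_sum_0:
  assumes "finite J"
  shows "cycle_sum J n 0 = (if n = 0 then 1 else 0)"
proof -
  have "cycle_types J n 0 = (if n = 0 then {\<lambda>j\<in>J. 0} else {})"
    using assms by (auto simp: cycle_types_def PiE_iff extensional_def fun_eq_iff)
  then show ?thesis by (simp add: cycle_sum_def cycle_weight_def)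
qed

lemma cycle_weight_fun_upd_Suc:
  assumes "finite J" "0 \<notin> J" "j \<in> J"
  shows "real (j * Suc c) * cycle_weight J (k(j := Suc c)) = cycle_weight J (k(j := c))"
proof -
  have "0 < j" using assms(2,3) by (cases j) auto
  define F :: "nat \<Rightarrow> nat \<Rightarrow> real" where "F i v = fact v * real i ^ v" for i v
  define P where "P c' = (\<Prod>i\<in>J. F i ((k(j := c')) i))" for c'
  have "P (Suc c) * F j c = P c * F j (Suc c)"
    using prod_fun_upd_exchange[OF assms(1,3), of F "k(j := c)" "Suc c"] by (simp add: P_def)
  moreover have "F j (Suc c) = real (j * Suc c) * F j c"
    by (simp add: F_def algebra_simps)
  ultimately have "P (Suc c) * F j c = (real (j * Suc c) * P c) * F j c"
    by (simp only: ac_simps)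
  moreover have "F j c \<noteq> 0" using \<open>0 < j\<close> by (simp add: F_def)
  ultimately have "P (Suc c) = real (j * Suc c) * P c"
    by simp
  moreover have "cycle_weight J (k(j := c')) = 1 / P c'" for c'
    by (simp add: cycle_weight_def P_def F_def)
  moreover have "real (j * Suc c) \<noteq> 0" using \<open>0 < j\<close> by (simp only: of_nat_eq_0_iff mult_eq_0_iff) simp
  ultimately show ?thesis by simp
qed

lemma bij_betw_add_cycle:
  assumes "finite J" "j \<in> J" "j \<le> n"
  shows "bij_betw (\<lambda>k. k(j := Suc (k j))) (cycle_types J (n - j) M)
           {k \<in> cycle_types J n (Suc M). k j \<noteq> 0}"
proof (rule bij_betw_byWitness[where f' = "\<lambda>k. k(j := k j - 1)"])
  note swap = sum_fun_upd_exchange[OF assms(1,2), where h = "\<lambda>i v. i * v"]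
              sum_fun_upd_exchange[OF assms(1,2), where h = "\<lambda>i v. v"]
  show "(\<lambda>k. k(j := Suc (k j))) ` cycle_types J (n - j) M \<subseteq> {k \<in> cycle_types J n (Suc M). k j \<noteq> 0}"
  proof (rule image_subsetI)
    fix k assume "k \<in> cycle_types J (n - j) M"
    then show "k(j := Suc (k j)) \<in> {k \<in> cycle_types J n (Suc M). k j \<noteq> 0}"
      using swap[of k "Suc (k j)"] assms(2,3)
      by (auto simp: cycle_types_def PiE_iff extensional_def)
  qed
  show "(\<lambda>k. k(j := k j - 1)) ` {k \<in> cycle_types J n (Suc M). k j \<noteq> 0} \<subseteq> cycle_types J (n - j) M"
  proof (rule image_subsetI)
    fix k assume "k \<in> {k \<in> cycle_types J n (Suc M). k j \<noteq> 0}"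
    then have k: "k \<in> cycle_types J n (Suc M)" "k j \<noteq> 0" by auto
    then obtain c where c: "k j = Suc c" using not0_implies_Suc by blast
    then show "k(j := k j - 1) \<in> cycle_types J (n - j) M"
      using k swap[of k c] assms(2)
      by (auto simp: cycle_types_def PiE_iff extensional_def)
  qed
qed auto

lemma cycle_sum_remove_cycle:
  assumes "finite J" "0 \<notin> J" "j \<in> J"
  shows "(\<Sum>k\<in>cycle_types J n (Suc M). real (j * k j) * cycle_weight J k) =
         (if j \<le> n then cycle_sum J (n - j) M else 0)"
proof (cases "j \<le> n")
  case True
  let ?K = "cycle_types J n (Suc M)"
  have "(\<Sum>k\<in>?K. real (j * k j) * cycle_weight J k) =
      (\<Sum>k | k \<in> ?K \<and> k j \<noteq> 0. real (j * k j) * cycle_weight J k)"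
    by (rule sum.mono_neutral_right) (auto simp: finite_cycle_types assms)
  also have "\<dots> = (\<Sum>k\<in>cycle_types J (n - j) M.
      real (j * Suc (k j)) * cycle_weight J (k(j := Suc (k j))))"
    by (subst sum.reindex_bij_betw[OF bij_betw_add_cycle[OF assms(1,3) True], symmetric]) simp
  also have "\<dots> = cycle_sum J (n - j) M"
    unfolding cycle_sum_def
  proof (rule sum.cong)
    fix k
    show "real (j * Suc (k j)) * cycle_weight J (k(j := Suc (k j))) = cycle_weight J k"
      using cycle_weight_fun_upd_Suc[OF assms, of "k j" k] by simp
  qed simp
  finally show ?thesis using True by simp
next
  case False
  then have "k j = 0" if "k \<in> cycle_types J n (Suc M)" for k
    using cycle_types_mult_le[OF that assms(1,3)] by (cases "k j") auto
  then show ?thesis using False by (simp add: sum.neutral)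
qed

lemma cycle_sum_rec:
  assumes "finite J" "0 \<notin> J"
  shows "real n * cycle_sum J n (Suc M) = (\<Sum>j | j \<in> J \<and> j \<le> n. cycle_sum J (n - j) M)"
proof -
  let ?K = "cycle_types J n (Suc M)"
  have "real n * cycle_sum J n (Suc M) = (\<Sum>k\<in>?K. \<Sum>j\<in>J. real (j * k j) * cycle_weight J k)"
    unfolding cycle_sum_def sum_distrib_left sum_distrib_right[symmetric]
  proof (rule sum.cong)
    fix k assume "k \<in> ?K"
    then have "real n = real (\<Sum>j\<in>J. j * k j)" by (simp add: cycle_types_def)
    then show "real n * cycle_weight J k = (\<Sum>j\<in>J. real (j * k j)) * cycle_weight J k"
      by (simp only: of_nat_sum)
  qed simp
  also have "\<dots> = (\<Sum>j\<in>J. if j \<le> n then cycle_sum J (n - j) M else 0)"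
    by (subst sum.swap) (intro sum.cong refl cycle_sum_remove_cycle assms)
  also have "\<dots> = (\<Sum>j | j \<in> J \<and> j \<le> n. cycle_sum J (n - j) M)"
    by (rule sum.inter_filter[OF assms(1), symmetric])
  finally show ?thesis .
qed

lemma cycle_sum_rec_Suc_image:
  assumes "finite C"
  shows "real (Suc M + q) * cycle_sum (Suc ` C) (Suc M + q) (Suc M) =
         (\<Sum>c | c \<in> C \<and> c \<le> q. cycle_sum (Suc ` C) (M + (q - c)) M)"
proof -
  let ?J = "Suc ` C" and ?n = "Suc M + q"
  have "real ?n * cycle_sum ?J ?n (Suc M) = (\<Sum>j | j \<in> ?J \<and> j \<le> ?n. cycle_sum ?J (?n - j) M)"
    by (rule cycle_sum_rec) (use assms in auto)
  also have "\<dots> = (\<Sum>c | c \<in> C \<and> c \<le> M + q. cycle_sum ?J (M + q - c) M)"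
  proof -
    have "{j. j \<in> ?J \<and> j \<le> ?n} = Suc ` {c. c \<in> C \<and> c \<le> M + q}" by auto
    then show ?thesis by (simp add: sum.reindex)
  qed
  also have "\<dots> = (\<Sum>c | c \<in> C \<and> c \<le> q. cycle_sum ?J (M + q - c) M)"
  proof (rule sum.mono_neutral_right)
    show "\<forall>c\<in>{c. c \<in> C \<and> c \<le> M + q} - {c. c \<in> C \<and> c \<le> q}. cycle_sum ?J (M + q - c) M = 0"
      by (auto intro!: cycle_sum_eq_0)
  qed (auto simp: assms)
  also have "\<dots> = (\<Sum>c | c \<in> C \<and> c \<le> q. cycle_sum ?J (M + (q - c)) M)"
    by (rule sum.cong) auto
  finally show ?thesis .
qed

definition pi_weight_ivl :: "nat \<Rightarrow> nat \<Rightarrow> (nat \<Rightarrow> nat) \<Rightarrow> real" where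
  "pi_weight_ivl a b m = (\<Prod>i=a..b. 1 / real ((\<Sum>j=i..b. m j) + (b - i + 1)))"

definition pi_sum :: "nat set \<Rightarrow> nat \<Rightarrow> nat \<Rightarrow> nat \<Rightarrow> real" where
  "pi_sum C a b q = (\<Sum>m | m \<in> {a..b} \<rightarrow>\<^sub>E C \<and> (\<Sum>i=a..b. m i) = q. pi_weight_ivl a b m)"

lemma sum_ivl_fun_upd_first:
  assumes "a \<le> b"
  shows "(\<Sum>i=a..b. (m(a := c)) i) = c + (\<Sum>i=Suc a..b. m i)"
  using assms by (simp add: sum.atLeast_Suc_atMost)

lemma pi_weight_ivl_fun_upd_first:
  assumes "a \<le> b"
  shows "pi_weight_ivl a b (m(a := c)) =
         1 / real (c + (\<Sum>i=Suc a..b. m i) + (b - a + 1)) * pi_weight_ivl (Suc a) b m"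
proof -
  have "pi_weight_ivl a b (m(a := c)) =
      1 / real ((\<Sum>i=a..b. (m(a := c)) i) + (b - a + 1)) * pi_weight_ivl (Suc a) b (m(a := c))"
    unfolding pi_weight_ivl_def using assms by (rule prod.atLeast_Suc_atMost)
  also have "(\<Sum>i=a..b. (m(a := c)) i) = c + (\<Sum>i=Suc a..b. m i)"
    using assms by (rule sum_ivl_fun_upd_first)
  also have "pi_weight_ivl (Suc a) b (m(a := c)) = pi_weight_ivl (Suc a) b m"
    unfolding pi_weight_ivl_def by (intro prod.cong sum.cong) auto
  finally show ?thesis .
qed

lemma pi_sum_empty:
  assumes "b < a"
  shows "pi_sum C a b q = (if q = 0 then 1 else 0)"
  using assms by (simp add: pi_sum_def pi_weight_ivl_def)

lemma pi_sum_conv_PiE: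
  assumes "finite C"
  shows "pi_sum C a b q = (\<Sum>m\<in>{a..b} \<rightarrow>\<^sub>E C. if (\<Sum>i=a..b. m i) = q then pi_weight_ivl a b m else 0)"
  unfolding pi_sum_def using assms by (simp add: sum.inter_filter[symmetric] finite_PiE)

lemma pi_sum_rec:
  assumes "finite C" "a \<le> b"
  shows "real (q + (b - a + 1)) * pi_sum C a b q =
         (\<Sum>c | c \<in> C \<and> c \<le> q. pi_sum C (Suc a) b (q - c))"
proof -
  let ?N = "b - a + 1" and ?S = "\<lambda>g. \<Sum>i=Suc a..b. g i" and ?w = "pi_weight_ivl (Suc a) b"
  have "{a..b} = insert a {Suc a..b}" using assms(2) by auto
  then have "(\<Sum>m\<in>{a..b} \<rightarrow>\<^sub>E C. h m) = (\<Sum>c\<in>C. \<Sum>g\<in>{Suc a..b} \<rightarrow>\<^sub>E C. h (g(a := c)))"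
    for h :: "(nat \<Rightarrow> nat) \<Rightarrow> real"
    using sum_PiE_insert[of a "{Suc a..b}" h "\<lambda>_. C"] by simp
  then have "pi_sum C a b q = (\<Sum>c\<in>C. \<Sum>g\<in>{Suc a..b} \<rightarrow>\<^sub>E C.
      if (\<Sum>i=a..b. (g(a := c)) i) = q then pi_weight_ivl a b (g(a := c)) else 0)"
    by (simp only: pi_sum_conv_PiE[OF assms(1)])
  also have "\<dots> = (\<Sum>c\<in>C. \<Sum>g\<in>{Suc a..b} \<rightarrow>\<^sub>E C.
      if c + ?S g = q then 1 / real (q + ?N) * ?w g else 0)"
    by (simp only: sum_ivl_fun_upd_first[OF assms(2)] pi_weight_ivl_fun_upd_first[OF assms(2)])
      (intro sum.cong refl; simp)
  finally have "real (q + ?N) * pi_sum C a b q =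
      (\<Sum>c\<in>C. \<Sum>g\<in>{Suc a..b} \<rightarrow>\<^sub>E C. if c \<le> q then (if ?S g = q - c then ?w g else 0) else 0)"
    by (simp only: sum_distrib_left) (intro sum.cong refl; auto)
  also have "\<dots> = (\<Sum>c\<in>C. if c \<le> q then pi_sum C (Suc a) b (q - c) else 0)"
    by (intro sum.cong refl) (simp add: pi_sum_conv_PiE[OF assms(1)])
  also have "\<dots> = (\<Sum>c | c \<in> C \<and> c \<le> q. pi_sum C (Suc a) b (q - c))"
    by (rule sum.inter_filter[OF assms(1), symmetric])
  finally show ?thesis .
qed

lemma pi_sum_eq_cycle_sum:
  assumes "finite C" "a \<le> Suc b"
  shows "pi_sum C a b q = cycle_sum (Suc ` C) (Suc b - a + q) (Suc b - a)"
  using assms(2)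
proof (induction a arbitrary: q rule: inc_induct)
  case base
  then show ?case using assms(1) by (simp add: pi_sum_empty cycle_sum_0)
next
  case (step a)
  let ?M = "b - a" and ?J = "Suc ` C"
  have "real (Suc ?M + q) * pi_sum C a b q = (\<Sum>c | c \<in> C \<and> c \<le> q. pi_sum C (Suc a) b (q - c))"
    using pi_sum_rec[OF assms(1), of a b q] step.hyps by (simp add: ac_simps)
  also have "\<dots> = (\<Sum>c | c \<in> C \<and> c \<le> q. cycle_sum ?J (?M + (q - c)) ?M)"
    by (simp add: step.IH)
  also have "\<dots> = real (Suc ?M + q) * cycle_sum ?J (Suc ?M + q) (Suc ?M)"
    by (rule cycle_sum_rec_Suc_image[OF assms(1), symmetric])
  finally show ?case
    using step.hyps by (simp add: Suc_diff_le)
qed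

theorem mainTheorem8:
  fixes p n q :: nat
  assumes "q \<le> (p * n) div (p + 1)"
  shows "(\<Sum>m\<in>S_set n q p. pi_weight n q m) =
         (\<Sum>k\<in>K_set n q p. 1 / (\<Prod>j=1..p+1. fact (k j) * real j ^ (k j)))"
proof -
  have "q \<le> (p * n) div (p + 1)" by (fact assms)
  also have "\<dots> \<le> ((p + 1) * n) div (p + 1)" by (rule div_le_mono) simp
  also have "\<dots> = n" by (rule nonzero_mult_div_cancel_left) simp
  finally have "q \<le> n" .
  have "(\<Sum>m\<in>S_set n q p. pi_weight n q m) = pi_sum {0..p} 1 (n - q) q"
    unfolding pi_sum_def S_set_def pi_weight_def pi_weight_ivl_def by simp
  also have "\<dots> = cycle_sum {1..p+1} n (n - q)"
    using pi_sum_eq_cycle_sum[of "{0..p}" 1 "n - q" q] \<open>q \<le> n\<close> by simp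
  also have "\<dots> = (\<Sum>k\<in>K_set n q p. 1 / (\<Prod>j=1..p+1. fact (k j) * real j ^ (k j)))"
    unfolding cycle_sum_def cycle_types_def K_set_def cycle_weight_def by simp
  finally show ?thesis .
qed

end
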